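(* Let $\varphi$ be an Orlicz $N$-function with Young–Fenchel transform $\psi$ and let $q_\varphi$ be the generalized inverse of the density of $\varphi$. Let $\{X_{k,n},k\ge1,n\ge1\}$ be a double array of $\varphi$-subgaussian random variables with $\sup_{k,n\in\mathbb N}\tau_\varphi(X_{k,n})\le1$. Suppose there exists $\varepsilon_0>0$ such that for every $\varepsilon\in(0,\varepsilon_0]$ $$\int_0^{+\infty}\psi(x)q_\varphi(x)\exp(-\varepsilon q_\varphi(x))\,dx<+\infty.$$ Then $$\lim_{m\vee j\to+\infty}\left(\max_{1\le k\le m,1\le n\le j}X_{k,n}-\psi^{-1}(\ln(mj))\right)^+=0\quad\text{a.s.}$$
   Context: An Orlicz $N$-function is a continuous even convex function $\varphi:\mathbb R\to\mathbb R$ with $\varphi(0)=0$, increasing on $(0,\infty)$, with $\varphi(x)/x\to0$ as $x\to0$ and $\varphi(x)/x\to+\infty$ as $x\to+\infty$. It can be written $\varphi(x)=\int_0^{|x|}p_\varphi(t)\,dt$ with non-decreasing density $p_\varphi$; its generalized inverse is $q_\varphi(t)=\sup\{u\ge0:p_\varphi(u)\le t\}$. The Young–Fenchel transform is $\psi(x)=\sup_{y\in\mathbb R}(xy-\varphi(y))$, with $\psi(x)=\int_0^{|x|}q_\varphi(t)dt$; $\psi^{-1}$ is the inverse of $\psi$ on $[0,\infty)$. A random variable $X$ is $\varphi$-subgaussian if $EX=0$ and there is a finite $a>0$ with $E\exp(tX)\le\exp(\varphi(at))$ for all $t$; $\tau_\varphi(X)=\inf\{a>0:E\exp(tX)\le\exp(\varphi(at))\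 \forall t\}$. $u^+=\max(u,0)$. $\lim_{m\vee j\to\infty}b_{m,j}=b$ means: for every $\varepsilon>0$ there is $N$ with $|b_{m,j}-b|<\varepsilon$ whenever $\max(m,j)\ge N$. *)

theory Defs
  imports "HOL-Probability.Probability"
begin

definition N_function :: "(real \<Rightarrow> real) \<Rightarrow> bool" where
  "N_function \<phi> \<longleftrightarrow>
     continuous_on UNIV \<phi> \<and> (\<forall>x. \<phi> (-x) = \<phi> x) \<and> convex_on UNIV \<phi> \<and> \<phi> 0 = 0 \<and>
     strict_mono_on {0<..} \<phi> \<and>
     ((\<lambda>x. \<phi> x / x) \<longlongrightarrow> 0) (at_right 0) \<and>
     filterlim (\<lambda>x. \<phi> x / x) at_top at_top"

definition gen_inv :: "(real \<Rightarrow> real) \<Rightarrow> real \<Rightarrow> real" where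
  "gen_inv p t = Sup {u. u \<ge> 0 \<and> p u \<le> t}"

definition young_fenchel :: "(real \<Rightarrow> real) \<Rightarrow> real \<Rightarrow> real" where
  "young_fenchel \<phi> x = (SUP y. x * y - \<phi> y)"

definition inv_nonneg :: "(real \<Rightarrow> real) \<Rightarrow> real \<Rightarrow> real" where
  "inv_nonneg f v = (THE x. x \<ge> 0 \<and> f x = v)"

definition subg_bound :: "'a measure \<Rightarrow> (real \<Rightarrow> real) \<Rightarrow> ('a \<Rightarrow> real) \<Rightarrow> real \<Rightarrow> bool" where
  "subg_bound M \<phi> X a \<longleftrightarrow>
     (\<forall>t. integrable M (\<lambda>\<omega>. exp (t * X \<omega>)) \<and>
          (\<integral>\<omega>. exp (t * X \<omega>) \<partial>M) \<le> exp (\<phi> (a * t)))"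

definition phi_subgaussian :: "'a measure \<Rightarrow> (real \<Rightarrow> real) \<Rightarrow> ('a \<Rightarrow> real) \<Rightarrow> bool" where
  "phi_subgaussian M \<phi> X \<longleftrightarrow>
     X \<in> borel_measurable M \<and> integrable M X \<and> (\<integral>\<omega>. X \<omega> \<partial>M) = 0 \<and>
     (\<exists>a>0. subg_bound M \<phi> X a)"

definition tau_phi :: "'a measure \<Rightarrow> (real \<Rightarrow> real) \<Rightarrow> ('a \<Rightarrow> real) \<Rightarrow> real" where
  "tau_phi M \<phi> X = Inf {a. a > 0 \<and> subg_bound M \<phi> X a}"

end

theory Submission
  imports Defs
begin

(* Fix delta > 0, and write psi for the Young-Fenchel transform of phi and q for the generalized
   inverse of its density. Group the index pairs into blocks: block i consists of the pairs (k, n)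
   with k n <= T_i = exp (psi ((i+1) delta)); by a harmonic-sum count it has at most
   T_i (1 + ln T_i) elements. Since tau_phi <= 1, the Chernoff bound gives
   P (X k n >= u) <= exp (- psi u), so some X k n of block i reaches (i+3) delta with probability
   at most (1 + psi ((i+1) delta)) exp (psi ((i+1) delta) - psi ((i+3) delta)). Young's equality
   psi x = x q x - phi (q x) yields psi (x + delta) >= psi x + delta q x, which bounds this by
   (1 + psi ((i+1) delta)) exp (- delta q ((i+2) delta)); comparing with a step function under the
   integral of the hypothesis shows that these bounds are summable. By Borel-Cantelli, almost surely
   only finitely many blocks are exceeded. A pair with i delta <= psi^-1 (ln (k n)) < (i+1) delta
   lies in block i, so eventually X k n < psi^-1 (ln (k n)) + 3 delta, and monotonicity of
   psi^-1 o ln turns this into the bound for the maximum over {1..m} x {1..j}. Finally delta runs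
   through a sequence tending to 0. *)

section \<open>N-functions and their Young--Fenchel transform\<close>

lemma N_function_nonneg:
  assumes "N_function \<phi>" shows "0 \<le> \<phi> x"
proof -
  have "convex_on UNIV \<phi>" "\<phi> (-x) = \<phi> x" "\<phi> 0 = 0"
    using assms unfolding N_function_def by auto
  moreover from this(1) have "\<phi> ((1 - 1/2) *\<^sub>R x + (1/2) *\<^sub>R (-x)) \<le> (1 - 1/2) * \<phi> x + (1/2) * \<phi> (-x)"
    by (rule convex_onD) auto
  ultimately show ?thesis by simp
qed

lemma N_function_abs:
  assumes "N_function \<phi>" shows "\<phi> \<bar>x\<bar> = \<phi> x"
  using assms unfolding N_function_def by (cases "x \<ge> 0") auto

lemma N_function_mono_abs:
  assumes "N_function \<phi>" and "\<bar>x\<bar> \<le> \<bar>y\<bar>" shows "\<phi> x \<le> \<phi> y"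
proof (cases "x = 0")
  case True
  then show ?thesis using assms N_function_nonneg[of \<phi> y] unfolding N_function_def by auto
next
  case False
  then have "\<phi> \<bar>x\<bar> \<le> \<phi> \<bar>y\<bar>"
    using assms unfolding N_function_def by (auto intro: strict_mono_on_leD)
  then show ?thesis using N_function_abs[OF assms(1)] by simp
qed

lemma young_fenchel_bdd_above:
  assumes "N_function \<phi>" shows "bdd_above (range (\<lambda>y. x * y - \<phi> y))"
proof -
  have "filterlim (\<lambda>y. \<phi> y / y) at_top at_top" using assms unfolding N_function_def by auto
  then obtain R where R: "\<And>y. y \<ge> R \<Longrightarrow> \<bar>x\<bar> \<le> \<phi> y / y"
    by (auto simp: filterlim_at_top eventually_at_top_linorder)
  define R' where "R' = max R 1"
  have "\<bar>x\<bar> * z - \<phi> z \<le> \<bar>x\<bar> * R'" if "z \<ge> 0" for z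
  proof (cases "z \<ge> R'")
    case True
    then have "\<bar>x\<bar> * z \<le> \<phi> z" using R[of z] unfolding R'_def by (simp add: field_simps)
    moreover have "0 \<le> \<bar>x\<bar> * R'" unfolding R'_def by simp
    ultimately show ?thesis by linarith
  next
    case False
    then have "\<bar>x\<bar> * z \<le> \<bar>x\<bar> * R'" by (intro mult_left_mono) auto
    then show ?thesis using N_function_nonneg[OF assms, of z] by linarith
  qed
  moreover have "x * y \<le> \<bar>x\<bar> * \<bar>y\<bar>" for y by (simp add: abs_mult[symmetric])
  ultimately have "x * y - \<phi> y \<le> \<bar>x\<bar> * R'" for y
    using N_function_abs[OF assms, of y] by (metis abs_ge_zero add_le_cancel_right diff_add_cancel order_trans)
  then show ?thesis by (auto intro: bdd_aboveI[of _ "\<bar>x\<bar> * R'"])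
qed

lemma young_fenchel_ge:
  assumes "N_function \<phi>" shows "x * y - \<phi> y \<le> young_fenchel \<phi> x"
  unfolding young_fenchel_def by (rule cSUP_upper[OF _ young_fenchel_bdd_above[OF assms]]) auto

lemma young_fenchel_le:
  assumes "\<And>y. x * y - \<phi> y \<le> B" shows "young_fenchel \<phi> x \<le> B"
  unfolding young_fenchel_def by (rule cSUP_least) (use assms in auto)

lemma young_fenchel_0:
  assumes "N_function \<phi>" shows "young_fenchel \<phi> 0 = 0"
proof (rule antisym)
  show "young_fenchel \<phi> 0 \<le> 0"
    by (rule young_fenchel_le) (use N_function_nonneg[OF assms] in auto)
  show "0 \<le> young_fenchel \<phi> 0"
    using young_fenchel_ge[OF assms, of 0 0] assms unfolding N_function_def by simp
qed

lemma young_fenchel_pos: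
  assumes "N_function \<phi>" and "x > 0" shows "young_fenchel \<phi> x > 0"
proof -
  have "((\<lambda>y. \<phi> y / y) \<longlongrightarrow> 0) (at_right 0)" using assms unfolding N_function_def by auto
  then have "\<forall>\<^sub>F y in at_right 0. 0 < y \<and> \<phi> y / y < x"
    using assms(2) eventually_at_right_less[of 0]
    by (auto simp: order_tendsto_iff elim: eventually_elim2)
  then have "\<exists>y. 0 < y \<and> \<phi> y / y < x" by (rule eventually_happens'[rotated]) simp
  then obtain y where "y > 0" "\<phi> y / y < x" by blast
  then have "0 < x * y - \<phi> y" by (simp add: field_simps)
  also have "\<dots> \<le> young_fenchel \<phi> x" by (rule young_fenchel_ge[OF assms(1)])
  finally show ?thesis .
qed

lemma convex_on_young_fenchel:
  assumes "N_function \<phi>" shows "convex_on UNIV (young_fenchel \<phi>)"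
proof (rule convex_onI)
  fix t x z :: real assume t: "0 < t" "t < 1"
  show "young_fenchel \<phi> ((1 - t) *\<^sub>R x + t *\<^sub>R z) \<le> (1 - t) * young_fenchel \<phi> x + t * young_fenchel \<phi> z"
  proof (rule young_fenchel_le)
    fix y
    have "((1 - t) *\<^sub>R x + t *\<^sub>R z) * y - \<phi> y = (1 - t) * (x * y - \<phi> y) + t * (z * y - \<phi> y)"
      by (simp add: algebra_simps)
    also have "\<dots> \<le> (1 - t) * young_fenchel \<phi> x + t * young_fenchel \<phi> z"
      using young_fenchel_ge[OF assms, of x y] young_fenchel_ge[OF assms, of z y] t
      by (intro add_mono mult_left_mono) auto
    finally show "((1 - t) *\<^sub>R x + t *\<^sub>R z) * y - \<phi> y \<le> \<dots>" .
  qed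
qed simp

lemma strict_mono_on_young_fenchel:
  assumes "N_function \<phi>" shows "strict_mono_on {0..} (young_fenchel \<phi>)"
proof (rule strict_mono_onI)
  fix x z :: real assume "x \<in> {0..}" "z \<in> {0..}" "x < z"
  then have t: "0 \<le> x / z" "x / z < 1" and "x = (1 - x / z) * 0 + (x / z) * z" by auto
  then have "young_fenchel \<phi> x \<le> (1 - x / z) * young_fenchel \<phi> 0 + (x / z) * young_fenchel \<phi> z"
    using convex_onD[OF convex_on_young_fenchel[OF assms], of "x / z" 0 z] by auto
  also have "\<dots> = (x / z) * young_fenchel \<phi> z" using young_fenchel_0[OF assms] by simp
  also have "\<dots> < 1 * young_fenchel \<phi> z"
    using t young_fenchel_pos[OF assms, of z] \<open>x < z\<close> \<open>x \<in> {0..}\<close>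
    by (intro mult_strict_right_mono) auto
  finally show "young_fenchel \<phi> x < young_fenchel \<phi> z" by simp
qed

lemma young_fenchel_less_iff:
  assumes "N_function \<phi>" "0 \<le> x" "0 \<le> y"
  shows "young_fenchel \<phi> x < young_fenchel \<phi> y \<longleftrightarrow> x < y"
  using strict_mono_on_less[OF strict_mono_on_young_fenchel[OF assms(1)]] assms(2,3) by simp

lemma young_fenchel_le_iff:
  assumes "N_function \<phi>" "0 \<le> x" "0 \<le> y"
  shows "young_fenchel \<phi> x \<le> young_fenchel \<phi> y \<longleftrightarrow> x \<le> y"
  using strict_mono_on_less_eq[OF strict_mono_on_young_fenchel[OF assms(1)]] assms(2,3) by simp

lemma young_fenchel_nonneg:
  assumes "N_function \<phi>" "0 \<le> x" shows "0 \<le> young_fenchel \<phi> x"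
  using young_fenchel_le_iff[OF assms(1) order_refl assms(2)] young_fenchel_0[OF assms(1)] assms(2)
  by simp

lemma inv_nonneg_eq:
  fixes f :: "real \<Rightarrow> real"
  assumes "strict_mono_on {0..} f" "continuous_on {0..} f" "f 0 \<le> v" "v \<le> f b" "0 \<le> b"
  shows "0 \<le> inv_nonneg f v \<and> f (inv_nonneg f v) = v"
  unfolding inv_nonneg_def
proof (rule theI')
  obtain x where x: "0 \<le> x" "f x = v"
    using IVT'[of f 0 v b] continuous_on_subset[OF assms(2)] assms(3-5) by auto
  show "\<exists>!x. 0 \<le> x \<and> f x = v"
  proof (rule ex1I[of _ x])
    fix y assume "0 \<le> y \<and> f y = v"
    then show "y = x" using strict_mono_on_eqD[OF assms(1), of y x] x by auto
  qed (use x in simp)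
qed

lemma inv_nonneg_young_fenchel:
  assumes "N_function \<phi>" "0 \<le> v"
  shows "0 \<le> inv_nonneg (young_fenchel \<phi>) v \<and> young_fenchel \<phi> (inv_nonneg (young_fenchel \<phi>) v) = v"
proof (rule inv_nonneg_eq[OF strict_mono_on_young_fenchel[OF assms(1)]])
  show "continuous_on {0..} (young_fenchel \<phi>)"
    using convex_on_continuous[OF open_UNIV convex_on_young_fenchel[OF assms(1)]]
    by (rule continuous_on_subset) simp
  show "v \<le> young_fenchel \<phi> (v + \<phi> 1)"
    using young_fenchel_ge[OF assms(1), of "v + \<phi> 1" 1] by simp
  show "0 \<le> v + \<phi> 1" using assms N_function_nonneg[OF assms(1)] by (simp add: add_nonneg_nonneg)
qed (use young_fenchel_0[OF assms(1)] assms(2) in simp)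

lemma inv_young_fenchel_mono:
  assumes "N_function \<phi>" "0 \<le> v" "v \<le> w"
  shows "inv_nonneg (young_fenchel \<phi>) v \<le> inv_nonneg (young_fenchel \<phi>) w"
proof -
  have v: "0 \<le> inv_nonneg (young_fenchel \<phi>) v" "young_fenchel \<phi> (inv_nonneg (young_fenchel \<phi>) v) = v"
    and w: "0 \<le> inv_nonneg (young_fenchel \<phi>) w" "young_fenchel \<phi> (inv_nonneg (young_fenchel \<phi>) w) = w"
    using inv_nonneg_young_fenchel[OF assms(1)] assms(2,3) by auto
  show ?thesis using young_fenchel_le_iff[OF assms(1) v(1) w(1)] v(2) w(2) assms(3) by simp
qed

lemma less_inv_young_fenchel_iff:
  assumes "N_function \<phi>" "0 \<le> a" "0 \<le> v"
  shows "a < inv_nonneg (young_fenchel \<phi>) v \<longleftrightarrow> young_fenchel \<phi> a < v"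
  using inv_nonneg_young_fenchel[OF assms(1,3)] young_fenchel_less_iff[OF assms(1,2)] by force

section \<open>Step functions below an integrable function\<close>

lemma integral_ge_const:
  fixes f :: "real \<Rightarrow> real"
  assumes "f integrable_on {a..b}" "a \<le> b" "\<And>u. a < u \<Longrightarrow> u < b \<Longrightarrow> c \<le> f u"
  shows "c * (b - a) \<le> integral {a..b} f"
proof -
  define g where "g u = (if u \<in> {a, b} then c else f u)" for u
  have "integral {a..b} g = integral {a..b} f"
    by (rule integral_spike[of "{a, b}"]) (auto simp: g_def)
  moreover have "g integrable_on {a..b}"
    by (rule integrable_spike_finite[of "{a, b}" _ _ f]) (use assms(1) in \<open>auto simp: g_def\<close>)
  then have "integral {a..b} (\<lambda>_. c) \<le> integral {a..b} g"
    by (rule integral_le[rotated]) (use assms in \<open>auto simp: g_def\<close>)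
  ultimately show ?thesis using assms(2) by (simp add: mult.commute)
qed

lemma integral_le_const:
  fixes f :: "real \<Rightarrow> real"
  assumes "f integrable_on {a..b}" "a \<le> b" "\<And>u. a < u \<Longrightarrow> u < b \<Longrightarrow> f u \<le> c"
  shows "integral {a..b} f \<le> c * (b - a)"
  using integral_ge_const[of "\<lambda>u. - f u" a b "- c"] assms by (simp add: integrable_neg_iff)

lemma sum_step_indicators_le:
  fixes f :: "real \<Rightarrow> real" and c :: "nat \<Rightarrow> real"
  assumes "0 \<le> a" "0 < \<delta>"
    and c: "\<And>i x. a + real i * \<delta> \<le> x \<Longrightarrow> x < a + real (Suc i) * \<delta> \<Longrightarrow> 0 \<le> c i \<and> c i \<le> f x"
  shows "(\<Sum>i<n. ennreal (c i) * indicator {a + real i * \<delta> ..< a + real (Suc i) * \<delta>} x)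
           \<le> ennreal (f x) * indicator {0..} x"
proof -
  define I where "I i = {a + real i * \<delta> ..< a + real (Suc i) * \<delta>}" for i
  have "(\<Sum>i<n. ennreal (c i) * indicator (I i) x) \<le> ennreal (f x) * indicator {0..} x"
  proof (cases "\<exists>j<n. x \<in> I j")
    case True
    then obtain j where j: "j < n" "x \<in> I j" by blast
    have disjoint: "i = j" if "x \<in> I i" for i
    proof -
      have "real i * \<delta> < real (Suc j) * \<delta>" "real j * \<delta> < real (Suc i) * \<delta>"
        using that j(2) unfolding I_def by auto
      then have "real i < real (Suc j)" "real j < real (Suc i)"
        unfolding mult_less_cancel_right_pos[OF assms(2)] .
      then show ?thesis by simp
    qed
    have "ennreal (c i) * indicator (I i) x = (if i = j then ennreal (c j) else 0)" for i
      using disjoint[of i] j(2) by (cases "x \<in> I i") auto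
    then have "(\<Sum>i<n. ennreal (c i) * indicator (I i) x) = (\<Sum>i<n. if i = j then ennreal (c j) else 0)"
      by simp
    also have "\<dots> = ennreal (c j)" using j(1) by simp
    finally have sum_eq: "(\<Sum>i<n. ennreal (c i) * indicator (I i) x) = ennreal (c j)" .
    have "a + real j * \<delta> \<le> x" "x < a + real (Suc j) * \<delta>"
      using j(2) unfolding I_def by auto
    moreover have "0 \<le> real j * \<delta>" using assms(2) by simp
    ultimately have "0 \<le> x" "c j \<le> f x" using assms(1) c[of j x] by auto
    then show ?thesis unfolding sum_eq by (simp add: ennreal_leI)
  next
    case False
    then have "(\<Sum>i<n. ennreal (c i) * indicator (I i) x) = 0"
      by (intro sum.neutral ballI) simp
    then show ?thesis by simp
  qed
  then show ?thesis unfolding I_def .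
qed

lemma summable_of_nn_integral_bound:
  fixes f :: "real \<Rightarrow> real" and c :: "nat \<Rightarrow> real"
  assumes "0 \<le> a" "0 < \<delta>" "(\<integral>\<^sup>+ x\<in>{0..}. ennreal (f x) \<partial>lborel) < \<infinity>"
    and c: "\<And>i x. a + real i * \<delta> \<le> x \<Longrightarrow> x < a + real (Suc i) * \<delta> \<Longrightarrow> 0 \<le> c i \<and> c i \<le> f x"
  shows "summable c"
proof -
  define I where "I i = {a + real i * \<delta> ..< a + real (Suc i) * \<delta>}" for i
  have c0: "0 \<le> c i" for i using c[of i "a + real i * \<delta>"] assms(2) by simp
  obtain r where r: "0 \<le> r" "(\<integral>\<^sup>+ x\<in>{0..}. ennreal (f x) \<partial>lborel) = ennreal r"
    using assms(3) unfolding less_top[symmetric] by (auto simp: less_top_ennreal)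
  have "(\<Sum>i<n. c i * \<delta>) \<le> r" for n
  proof -
    have "emeasure lborel (I i) = ennreal \<delta>" for i
      using assms(2) unfolding I_def by (simp add: algebra_simps)
    then have "ennreal (\<Sum>i<n. c i * \<delta>) = (\<Sum>i<n. ennreal (c i) * emeasure lborel (I i))"
      using c0 assms(2) by (simp add: ennreal_mult sum_ennreal[symmetric] del: sum_ennreal)
    also have "\<dots> = (\<Sum>i<n. \<integral>\<^sup>+ x. ennreal (c i) * indicator (I i) x \<partial>lborel)"
      by (simp add: I_def nn_integral_cmult_indicator)
    also have "\<dots> = \<integral>\<^sup>+ x. (\<Sum>i<n. ennreal (c i) * indicator (I i) x) \<partial>lborel"
      by (rule nn_integral_sum[symmetric]) (simp add: I_def)
    also have "\<dots> \<le> ennreal r"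
      unfolding r(2)[symmetric] I_def by (rule nn_integral_mono) (rule sum_step_indicators_le[OF assms(1,2) c])
    finally show ?thesis using r(1) by simp
  qed
  then have "summable (\<lambda>i. c i * \<delta>)" by (intro summableI_nonneg_bounded) (use c0 assms(2) in auto)
  from summable_divide[OF this, of \<delta>] show ?thesis using assms(2) by simp
qed

section \<open>The density and its generalized inverse\<close>

locale N_function_density =
  fixes \<phi> p :: "real \<Rightarrow> real"
  assumes N_function: "N_function \<phi>" and mono_density: "mono p"
    and integral_density: "\<And>x. \<phi> x = integral {0..\<bar>x\<bar>} p"
begin

lemma density_integrable: "p integrable_on {a..b}"
  using mono_density by (intro integrable_on_mono_on) (simp add: monotone_on_def mono_def)

lemma N_function_diff_integral: "0 \<le> a \<Longrightarrow> a \<le> b \<Longrightarrow> \<phi> b - \<phi> a = integral {a..b} p"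
  using Henstock_Kurzweil_Integration.integral_combine[OF _ _ density_integrable, of 0 a b]
    integral_density[of a] integral_density[of b]
  by simp

lemma density_0_nonpos: "p 0 \<le> 0"
proof (rule ccontr)
  assume "\<not> p 0 \<le> 0"
  then have pos: "0 < p 0" by simp
  have "((\<lambda>y. \<phi> y / y) \<longlongrightarrow> 0) (at_right 0)" using N_function unfolding N_function_def by auto
  then have "\<forall>\<^sub>F y in at_right 0. 0 < y \<and> \<phi> y / y < p 0"
    using pos eventually_at_right_less[of 0] by (auto simp: order_tendsto_iff elim: eventually_elim2)
  then have "\<exists>y. 0 < y \<and> \<phi> y / y < p 0" by (rule eventually_happens'[rotated]) simp
  then obtain y where y: "0 < y" "\<phi> y / y < p 0" by blast
  have "p 0 * (y - 0) \<le> integral {0..y} p"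
    by (rule integral_ge_const[OF density_integrable]) (use y monoD[OF mono_density] in auto)
  then show False using y integral_density[of y] by (simp add: field_simps)
qed

lemma density_unbounded: "\<exists>U. \<forall>u\<ge>U. x < p u"
proof -
  have "filterlim (\<lambda>y. \<phi> y / y) at_top at_top" using N_function unfolding N_function_def by auto
  then obtain R where R: "\<And>y. y \<ge> R \<Longrightarrow> \<bar>x\<bar> + 1 \<le> \<phi> y / y"
    by (auto simp: filterlim_at_top eventually_at_top_linorder)
  define y where "y = max R 1"
  have y: "0 < y" "(\<bar>x\<bar> + 1) * y \<le> \<phi> y" using R[of y] unfolding y_def by (auto simp: field_simps)
  have "x < p y"
  proof (rule ccontr)
    assume "\<not> x < p y"
    then have "p u \<le> x" if "u < y" for u using monoD[OF mono_density, of u y] that by simp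
    then have "integral {0..y} p \<le> x * (y - 0)"
      using y by (intro integral_le_const[OF density_integrable]) auto
    also have "\<dots> \<le> \<bar>x\<bar> * y" using y by simp
    finally have "\<phi> y \<le> \<bar>x\<bar> * y" using integral_density[of y] y by simp
    then show False using y by (simp add: algebra_simps)
  qed
  then have "\<forall>u\<ge>y. x < p u" using monoD[OF mono_density] order_less_le_trans by blast
  then show ?thesis by blast
qed

lemma bdd_above_density_sublevel: "bdd_above {u. 0 \<le> u \<and> p u \<le> x}"
proof -
  obtain U where U: "\<forall>u\<ge>U. x < p u" using density_unbounded by blast
  then have "u \<le> U" if "p u \<le> x" for u using that by (meson U linear not_le)
  then show ?thesis by (intro bdd_aboveI[of _ U]) auto
qed

lemma gen_inv_ge: "0 \<le> u \<Longrightarrow> p u \<le> x \<Longrightarrow> u \<le> gen_inv p x"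
  unfolding gen_inv_def by (rule cSup_upper[OF _ bdd_above_density_sublevel]) simp

lemma gen_inv_nonneg: "0 \<le> x \<Longrightarrow> 0 \<le> gen_inv p x"
  using gen_inv_ge[of 0 x] density_0_nonpos by simp

lemma density_le_below_gen_inv:
  assumes "0 \<le> x" "0 \<le> u" "u < gen_inv p x" shows "p u \<le> x"
proof -
  have "0 \<in> {u. 0 \<le> u \<and> p u \<le> x}" using assms(1) density_0_nonpos by simp
  then obtain v where "0 \<le> v" "p v \<le> x" "u < v"
    using assms(3) less_cSup_iff[OF _ bdd_above_density_sublevel] unfolding gen_inv_def by blast
  then show ?thesis using monoD[OF mono_density, of u v] by simp
qed

lemma density_gt_above_gen_inv:
  assumes "0 \<le> x" "gen_inv p x < u" shows "x < p u"
proof (rule ccontr)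
  assume "\<not> x < p u"
  moreover have "0 \<le> u" using gen_inv_nonneg[OF assms(1)] assms(2) by simp
  ultimately have "u \<le> gen_inv p x" by (intro gen_inv_ge) simp_all
  then show False using assms(2) by simp
qed

lemma gen_inv_mono: "0 \<le> x \<Longrightarrow> x \<le> x' \<Longrightarrow> gen_inv p x \<le> gen_inv p x'"
  unfolding gen_inv_def
proof (rule cSup_subset_mono)
  assume "0 \<le> x"
  then show "{u. 0 \<le> u \<and> p u \<le> x} \<noteq> {}" using density_0_nonpos by auto
qed (use bdd_above_density_sublevel in auto)

lemma young_fenchel_eq:
  assumes "0 \<le> x" shows "young_fenchel \<phi> x = x * gen_inv p x - \<phi> (gen_inv p x)"
proof (rule antisym)
  define q where "q = gen_inv p x"
  have q: "0 \<le> q" using gen_inv_nonneg[OF assms] unfolding q_def .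
  have maximum_at_gen_inv: "x * y - \<phi> y \<le> x * q - \<phi> q" if "0 \<le> y" for y
  proof (cases "q \<le> y")
    case True
    have "x \<le> p u" if "q < u" for u
      using density_gt_above_gen_inv[OF assms, of u] that unfolding q_def by simp
    then have "x * (y - q) \<le> integral {q..y} p"
      by (intro integral_ge_const[OF density_integrable True])
    then show ?thesis using N_function_diff_integral[OF q True] by (simp add: algebra_simps)
  next
    case False
    have "p u \<le> x" if "y < u" "u < q" for u
      using density_le_below_gen_inv[OF assms, of u] that \<open>0 \<le> y\<close> unfolding q_def by simp
    then have "integral {y..q} p \<le> x * (q - y)"
      using False by (intro integral_le_const[OF density_integrable]) auto
    then show ?thesis using N_function_diff_integral[OF that, of q] False by (simp add: algebra_simps)
  qed
  have "x * y - \<phi> y \<le> x * q - \<phi> q" for y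
  proof -
    have "x * y - \<phi> y \<le> x * \<bar>y\<bar> - \<phi> \<bar>y\<bar>"
      using N_function_abs[OF N_function, of y] mult_left_mono[OF abs_ge_self[of y] assms] by simp
    also have "\<dots> \<le> x * q - \<phi> q" by (rule maximum_at_gen_inv) simp
    finally show ?thesis .
  qed
  then show "young_fenchel \<phi> x \<le> x * q - \<phi> q" by (rule young_fenchel_le)
qed (rule young_fenchel_ge[OF N_function])

lemma young_fenchel_add_ge:
  assumes "0 \<le> x" "0 \<le> h"
  shows "young_fenchel \<phi> x + h * gen_inv p x \<le> young_fenchel \<phi> (x + h)"
  using young_fenchel_eq[OF assms(1)] young_fenchel_ge[OF N_function, of "x + h" "gen_inv p x"]
  by (simp add: algebra_simps)

lemma summable_young_fenchel_gen_inv_steps: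
  assumes "0 < \<delta>"
    and "(\<integral>\<^sup>+ x\<in>{0..}. ennreal (young_fenchel \<phi> x * gen_inv p x * exp (- \<delta> * gen_inv p x)) \<partial>lborel) < \<infinity>"
  shows "summable (\<lambda>i. young_fenchel \<phi> ((real i + 1) * \<delta>) * gen_inv p ((real i + 1) * \<delta>)
                        * exp (- \<delta> * gen_inv p ((real i + 2) * \<delta>)))"
proof (rule summable_of_nn_integral_bound[OF less_imp_le[OF assms(1)] assms])
  let ?\<psi> = "young_fenchel \<phi>" and ?q = "gen_inv p"
  fix i x assume x: "\<delta> + real i * \<delta> \<le> x" "x < \<delta> + real (Suc i) * \<delta>"
  have lo: "0 \<le> (real i + 1) * \<delta>" "(real i + 1) * \<delta> \<le> x" and hi: "x \<le> (real i + 2) * \<delta>"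
    using x assms(1) by (simp_all add: algebra_simps)
  have "0 \<le> ?\<psi> ((real i + 1) * \<delta>)" "?\<psi> ((real i + 1) * \<delta>) \<le> ?\<psi> x"
    using young_fenchel_nonneg[OF N_function lo(1)] young_fenchel_le_iff[OF N_function lo(1)] lo
    by auto
  moreover have "0 \<le> ?q ((real i + 1) * \<delta>)" "?q ((real i + 1) * \<delta>) \<le> ?q x"
    using gen_inv_nonneg[OF lo(1)] gen_inv_mono[OF lo] by auto
  moreover have "exp (- \<delta> * ?q ((real i + 2) * \<delta>)) \<le> exp (- \<delta> * ?q x)"
    using gen_inv_mono[OF order.trans[OF lo] hi] assms(1) by simp
  ultimately show "0 \<le> ?\<psi> ((real i + 1) * \<delta>) * ?q ((real i + 1) * \<delta>) * exp (- \<delta> * ?q ((real i + 2) * \<delta>))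
      \<and> ?\<psi> ((real i + 1) * \<delta>) * ?q ((real i + 1) * \<delta>) * exp (- \<delta> * ?q ((real i + 2) * \<delta>))
          \<le> ?\<psi> x * ?q x * exp (- \<delta> * ?q x)"
    by (auto intro!: mult_mono)
qed

lemma one_add_young_fenchel_le:
  assumes "1 + \<phi> 1 \<le> x" "p 1 \<le> x"
  shows "1 + young_fenchel \<phi> x \<le> 2 * (young_fenchel \<phi> x * gen_inv p x)"
proof -
  have "0 \<le> x" using assms(1) N_function_nonneg[OF N_function, of 1] by linarith
  then have "1 \<le> young_fenchel \<phi> x" "1 \<le> gen_inv p x"
    using young_fenchel_ge[OF N_function, of x 1] gen_inv_ge[of 1 x] assms by auto
  then show ?thesis by (smt (verit) mult_le_cancel_left1)
qed

lemma summable_block_bound: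
  assumes "0 < \<delta>"
    and "(\<integral>\<^sup>+ x\<in>{0..}. ennreal (young_fenchel \<phi> x * gen_inv p x * exp (- \<delta> * gen_inv p x)) \<partial>lborel) < \<infinity>"
  shows "summable (\<lambda>i. (1 + young_fenchel \<phi> ((real i + 1) * \<delta>)) * exp (- \<delta> * gen_inv p ((real i + 2) * \<delta>)))"
proof -
  let ?\<psi> = "young_fenchel \<phi>" and ?q = "gen_inv p"
  obtain i0 :: nat where i0: "max (1 + \<phi> 1) (p 1) < real i0 * \<delta>"
    using ex_less_of_nat_mult[OF assms(1)] by blast
  have dominated: "norm ((1 + ?\<psi> ((real i + 1) * \<delta>)) * exp (- \<delta> * ?q ((real i + 2) * \<delta>)))
          \<le> 2 * (?\<psi> ((real i + 1) * \<delta>) * ?q ((real i + 1) * \<delta>)) * exp (- \<delta> * ?q ((real i + 2) * \<delta>))"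
    if "i0 \<le> i" for i
  proof -
    have "real i0 * \<delta> \<le> (real i + 1) * \<delta>" using that assms(1) by (intro mult_right_mono) auto
    then have "1 + ?\<psi> ((real i + 1) * \<delta>) \<le> 2 * (?\<psi> ((real i + 1) * \<delta>) * ?q ((real i + 1) * \<delta>))"
      using i0 by (intro one_add_young_fenchel_le) linarith+
    moreover have "0 \<le> ?\<psi> ((real i + 1) * \<delta>)"
      using young_fenchel_nonneg[OF N_function] assms(1) by simp
    ultimately show ?thesis by (simp add: mult_right_mono)
  qed
  have "summable (\<lambda>i. 2 * (?\<psi> ((real i + 1) * \<delta>) * ?q ((real i + 1) * \<delta>))
                               * exp (- \<delta> * ?q ((real i + 2) * \<delta>)))"
    using summable_mult[OF summable_young_fenchel_gen_inv_steps[OF assms], of 2] by (simp add: mult.assoc)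
  from summable_comparison_test'[OF this dominated] show ?thesis .
qed

end

section \<open>Exponential tails of \<open>\<phi>\<close>-subgaussian variables\<close>

lemma subg_bound_mono:
  assumes "N_function \<phi>" "subg_bound M \<phi> X a" "0 \<le> a" "a \<le> b"
  shows "subg_bound M \<phi> X b"
  unfolding subg_bound_def
proof
  fix t
  have "\<bar>a * t\<bar> \<le> \<bar>b * t\<bar>" using assms(3,4) by (simp add: abs_mult mult_right_mono)
  then have "exp (\<phi> (a * t)) \<le> exp (\<phi> (b * t))" using N_function_mono_abs[OF assms(1)] by simp
  moreover have "integrable M (\<lambda>\<omega>. exp (t * X \<omega>))" "(\<integral>\<omega>. exp (t * X \<omega>) \<partial>M) \<le> exp (\<phi> (a * t))"
    using assms(2) unfolding subg_bound_def by auto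
  ultimately show "integrable M (\<lambda>\<omega>. exp (t * X \<omega>)) \<and> (\<integral>\<omega>. exp (t * X \<omega>) \<partial>M) \<le> exp (\<phi> (b * t))"
    by linarith
qed

lemma tau_phi_nonneg:
  assumes "phi_subgaussian M \<phi> X" shows "0 \<le> tau_phi M \<phi> X"
proof -
  have "{a. 0 < a \<and> subg_bound M \<phi> X a} \<noteq> {}" using assms unfolding phi_subgaussian_def by blast
  then show ?thesis unfolding tau_phi_def by (rule cInf_greatest) simp
qed

lemma subg_bound_tau_phi:
  assumes N: "N_function \<phi>" and "phi_subgaussian M \<phi> X"
  shows "subg_bound M \<phi> X (tau_phi M \<phi> X)"
proof -
  define T where "T = {a. 0 < a \<and> subg_bound M \<phi> X a}"
  have "T \<noteq> {}" using assms(2) unfolding phi_subgaussian_def T_def by blast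
  moreover have "bdd_below T" unfolding T_def by (rule bdd_belowI[of _ 0]) simp
  ultimately have approx: "\<exists>a'\<in>T. a' < a" if "tau_phi M \<phi> X < a" for a
    using that cInf_less_iff unfolding tau_phi_def T_def[symmetric] by blast
  have above: "subg_bound M \<phi> X a" if lt: "tau_phi M \<phi> X < a" for a
  proof -
    obtain a' where "0 < a'" "subg_bound M \<phi> X a'" "a' < a"
      using approx[OF lt] unfolding T_def by blast
    then show ?thesis using subg_bound_mono[OF N, of M X a' a] by simp
  qed
  show ?thesis
    unfolding subg_bound_def
  proof
    fix t
    let ?\<tau> = "tau_phi M \<phi> X" and ?I = "\<integral>\<omega>. exp (t * X \<omega>) \<partial>M"
    have "((\<lambda>a. exp (\<phi> (a * t))) \<longlongrightarrow> exp (\<phi> (?\<tau> * t))) (at_right ?\<tau>)"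
      using N unfolding N_function_def
      by (intro tendsto_exp continuous_on_tendsto_compose[of UNIV \<phi>] tendsto_intros) auto
    moreover have "\<forall>\<^sub>F a in at_right ?\<tau>. ?I \<le> exp (\<phi> (a * t))"
      using eventually_at_right_less[of ?\<tau>]
      by (rule eventually_mono) (use above in \<open>simp add: subg_bound_def\<close>)
    ultimately have "?I \<le> exp (\<phi> (?\<tau> * t))" by (rule tendsto_lowerbound) simp
    moreover have "integrable M (\<lambda>\<omega>. exp (t * X \<omega>))"
      using above[of "?\<tau> + 1"] unfolding subg_bound_def by simp
    ultimately show "integrable M (\<lambda>\<omega>. exp (t * X \<omega>)) \<and> ?I \<le> exp (\<phi> (?\<tau> * t))"
      by simp
  qed
qed

lemma subg_bound_exceedance_le:
  assumes "subg_bound M \<phi> X a" "0 < a" "0 < y"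
  shows "measure M {\<omega> \<in> space M. u \<le> X \<omega>} \<le> exp (\<phi> y - u / a * y)"
proof -
  define t where "t = y / a"
  have t: "0 < t" "a * t = y" "t * u = u / a * y" using assms(2,3) unfolding t_def by auto
  have int: "integrable M (\<lambda>\<omega>. exp (t * X \<omega>))"
    and mgf: "(\<integral>\<omega>. exp (t * X \<omega>) \<partial>M) \<le> exp (\<phi> (a * t))"
    using assms(1) unfolding subg_bound_def by auto
  have "{\<omega> \<in> space M. u \<le> X \<omega>} = {\<omega> \<in> space M. exp (t * u) \<le> exp (t * X \<omega>)}"
    using t(1) by simp
  then have "measure M {\<omega> \<in> space M. u \<le> X \<omega>} \<le> (\<integral>\<omega>. exp (t * X \<omega>) \<partial>M) / exp (t * u)"
    by (simp only:) (rule integral_Markov_inequality_measure[OF int sets.top]; simp)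
  also have "\<dots> \<le> exp (\<phi> y) / exp (t * u)"
    using mgf t by (intro divide_right_mono) auto
  also have "\<dots> = exp (\<phi> y - u / a * y)"
    using t(3) by (simp add: exp_diff)
  finally show ?thesis .
qed

lemma subg_bound_tail:
  assumes "prob_space M" "N_function \<phi>" "subg_bound M \<phi> X a" "0 < a" "0 \<le> u"
  shows "measure M {\<omega> \<in> space M. u \<le> X \<omega>} \<le> exp (- young_fenchel \<phi> (u / a))"
proof -
  define P where "P = measure M {\<omega> \<in> space M. u \<le> X \<omega>}"
  have "0 \<le> P" "P \<le> 1" unfolding P_def using prob_space.prob_le_1[OF assms(1)] by auto
  show ?thesis
  proof (cases "P = 0")
    case False
    then have P: "0 < P" "ln P \<le> 0" using \<open>0 \<le> P\<close> \<open>P \<le> 1\<close> by auto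
    have "young_fenchel \<phi> (u / a) \<le> - ln P"
    proof (rule young_fenchel_le)
      fix y
      show "u / a * y - \<phi> y \<le> - ln P"
      proof (cases "0 < y")
        case False
        then have "u * y \<le> 0" using assms(5) by (simp add: mult_nonneg_nonpos)
        then have "u / a * y \<le> 0" using assms(4) by (simp add: divide_nonpos_pos)
        then show ?thesis using P N_function_nonneg[OF assms(2), of y] by linarith
      next
        case True
        then have "ln P \<le> ln (exp (\<phi> y - u / a * y))"
          using subg_bound_exceedance_le[OF assms(3,4) True, of u] P(1) unfolding P_def
          by (subst ln_le_cancel_iff) auto
        then show ?thesis by simp
      qed
    qed
    then have "exp (ln P) \<le> exp (- young_fenchel \<phi> (u / a))" by simp
    then show ?thesis using P(1) unfolding P_def by simp
  qed (simp add: P_def)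
qed

section \<open>Blocks of index pairs under hyperbolas\<close>

definition hyperbola_points :: "real \<Rightarrow> (nat \<times> nat) set" where
  "hyperbola_points T = {(k, n). 1 \<le> k \<and> 1 \<le> n \<and> real (k * n) \<le> T}"

lemma hyperbola_points_subset:
  "hyperbola_points T \<subseteq> Sigma {1..nat \<lfloor>T\<rfloor>} (\<lambda>k. {1..nat \<lfloor>T / real k\<rfloor>})"
proof
  fix z assume "z \<in> hyperbola_points T"
  then obtain k n where z: "z = (k, n)" "1 \<le> k" "1 \<le> n" "real k * real n \<le> T"
    unfolding hyperbola_points_def by auto
  moreover have "real k * 1 \<le> real k * real n" using z(3) by (intro mult_left_mono) auto
  ultimately have "real k \<le> T" by linarith
  moreover have "real n \<le> T / real k" using z(2,4) by (simp add: field_simps)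
  ultimately show "z \<in> Sigma {1..nat \<lfloor>T\<rfloor>} (\<lambda>k. {1..nat \<lfloor>T / real k\<rfloor>})"
    using z by (auto simp: le_nat_floor)
qed

lemma finite_hyperbola_points: "finite (hyperbola_points T)"
  by (rule finite_subset[OF hyperbola_points_subset]) simp

lemma card_hyperbola_points_le:
  assumes "1 \<le> T" shows "real (card (hyperbola_points T)) \<le> T * (1 + ln T)"
proof -
  define K where "K = nat \<lfloor>T\<rfloor>"
  have K: "1 \<le> K" "real K \<le> T" using assms unfolding K_def by linarith+
  have "card (hyperbola_points T) \<le> card (Sigma {1..K} (\<lambda>k. {1..nat \<lfloor>T / real k\<rfloor>}))"
    unfolding K_def by (rule card_mono[OF _ hyperbola_points_subset]) simp
  also have "\<dots> = (\<Sum>k=1..K. nat \<lfloor>T / real k\<rfloor>)" by simp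
  finally have "real (card (hyperbola_points T)) \<le> real (\<Sum>k=1..K. nat \<lfloor>T / real k\<rfloor>)"
    by (rule of_nat_mono)
  also have "\<dots> = (\<Sum>k=1..K. real (nat \<lfloor>T / real k\<rfloor>))" by (rule of_nat_sum)
  also have "\<dots> \<le> (\<Sum>k=1..K. T * inverse (real k))"
    using assms by (intro sum_mono) (simp add: divide_inverse[symmetric])
  also have "\<dots> = T * harm K" by (simp add: harm_def sum_distrib_left)
  also have "\<dots> \<le> T * (1 + ln T)"
  proof -
    have "harm K - ln (real K) \<le> (1 :: real)"
      using euler_mascheroni_sequence_decreasing[of 1 K] K by (simp add: harm_def)
    moreover have "ln (real K) \<le> ln T" using K by simp
    ultimately show ?thesis using assms by (intro mult_left_mono) auto
  qed
  finally show ?thesis .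
qed

lemma ex_nat_mult_le_less:
  fixes y \<delta> :: real
  assumes "0 < \<delta>" "0 \<le> y"
  shows "\<exists>i::nat. real i * \<delta> \<le> y \<and> y < (real i + 1) * \<delta>"
proof
  define i where "i = nat \<lfloor>y / \<delta>\<rfloor>"
  have "real i = of_int \<lfloor>y / \<delta>\<rfloor>" using assms unfolding i_def by simp
  then have "real i \<le> y / \<delta>" "y / \<delta> < real i + 1" using floor_correct[of "y / \<delta>"] by linarith+
  then show "real i * \<delta> \<le> y \<and> y < (real i + 1) * \<delta>" using assms(1) by (simp add: field_simps)
qed

lemma bounded_or_below_inv_young_fenchel:
  fixes x :: "nat \<Rightarrow> nat \<Rightarrow> real"
  assumes N: "N_function \<phi>" and "0 < \<delta>"
    and below: "\<And>i k n. I \<le> i \<Longrightarrow> (k, n) \<in> hyperbola_points (exp (young_fenchel \<phi> ((real i + 1) * \<delta>)))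
                  \<Longrightarrow> x k n < (real i + 3) * \<delta>"
  shows "\<exists>C. \<forall>k n. 1 \<le> k \<longrightarrow> 1 \<le> n \<longrightarrow>
           x k n \<le> C \<or> x k n < inv_nonneg (young_fenchel \<phi>) (ln (real (k * n))) + 3 * \<delta>"
proof -
  let ?\<psi> = "young_fenchel \<phi>"
  define S where "S i = hyperbola_points (exp (?\<psi> ((real i + 1) * \<delta>)))" for i
  obtain C where C: "\<And>k n. (k, n) \<in> S I \<Longrightarrow> x k n \<le> C"
    using bdd_above_finite[OF finite_imageI[OF finite_hyperbola_points, of "\<lambda>(k, n). x k n"]]
    unfolding S_def bdd_above_def by fast
  have "x k n < inv_nonneg ?\<psi> (ln (real (k * n))) + 3 * \<delta>"
    if kn: "1 \<le> k" "1 \<le> n" "(k, n) \<notin> S I" for k n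
  proof -
    have "1 \<le> k * n" using kn by (simp add: one_le_mult_iff)
    then have "1 \<le> real (k * n)" using of_nat_le_iff[of 1 "k * n"] by simp
    define y where "y = inv_nonneg ?\<psi> (ln (real (k * n)))"
    have y: "0 \<le> y" "?\<psi> y = ln (real (k * n))"
      using inv_nonneg_young_fenchel[OF N] \<open>1 \<le> real (k * n)\<close> unfolding y_def by auto
    have "exp (?\<psi> ((real I + 1) * \<delta>)) < real (k * n)"
      using kn unfolding S_def hyperbola_points_def by auto
    then have "?\<psi> ((real I + 1) * \<delta>) < ln (real (k * n))"
      using ln_less_cancel_iff[of "exp (?\<psi> ((real I + 1) * \<delta>))" "real (k * n)"] kn by simp
    then have "(real I + 1) * \<delta> < y"
      using less_inv_young_fenchel_iff[OF N] \<open>0 < \<delta>\<close> \<open>1 \<le> real (k * n)\<close> unfolding y_def by simp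
    obtain i :: nat where i: "real i * \<delta> \<le> y" "y < (real i + 1) * \<delta>"
      using ex_nat_mult_le_less[OF \<open>0 < \<delta>\<close> y(1)] by blast
    then have "(real I + 1) * \<delta> < (real i + 1) * \<delta>" using \<open>(real I + 1) * \<delta> < y\<close> by linarith
    then have "I \<le> i" using mult_less_cancel_right_pos[OF \<open>0 < \<delta>\<close>] by simp
    from i(2) have "ln (real (k * n)) \<le> ?\<psi> ((real i + 1) * \<delta>)"
      using young_fenchel_le_iff[OF N y(1), of "(real i + 1) * \<delta>"] y(2) \<open>0 < \<delta>\<close> by simp
    then have "exp (ln (real (k * n))) \<le> exp (?\<psi> ((real i + 1) * \<delta>))" by simp
    then have "(k, n) \<in> S i"
      using kn \<open>1 \<le> real (k * n)\<close> unfolding S_def hyperbola_points_def by simp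
    then have "x k n < real i * \<delta> + 3 * \<delta>" using below[OF \<open>I \<le> i\<close>] unfolding S_def by (simp add: algebra_simps)
    then show ?thesis using i(1) unfolding y_def by simp
  qed
  then show ?thesis using C by (meson not_le)
qed

lemma eventually_Max_below_inv_young_fenchel:
  fixes x :: "nat \<Rightarrow> nat \<Rightarrow> real"
  assumes N: "N_function \<phi>" and "0 \<le> e"
    and bound: "\<forall>k n. 1 \<le> k \<longrightarrow> 1 \<le> n \<longrightarrow>
           x k n \<le> C \<or> x k n < inv_nonneg (young_fenchel \<phi>) (ln (real (k * n))) + e"
  shows "\<exists>N. \<forall>m j. 1 \<le> m \<longrightarrow> 1 \<le> j \<longrightarrow> N \<le> max m j \<longrightarrow>
           Max ((\<lambda>(k, n). x k n) ` ({1..m} \<times> {1..j})) < inv_nonneg (young_fenchel \<phi>) (ln (real (m * j))) + e"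
proof (intro exI allI impI)
  let ?\<psi> = "young_fenchel \<phi>"
  define C' where "C' = max C 0"
  have C': "0 \<le> C'" "C \<le> C'" unfolding C'_def by simp_all
  fix m j :: nat assume mj: "1 \<le> m" "1 \<le> j" "nat \<lceil>exp (?\<psi> C')\<rceil> + 1 \<le> max m j"
  have "1 \<le> m * j" using mj(1,2) by (simp add: one_le_mult_iff)
  then have "1 \<le> real (m * j)" using of_nat_le_iff[of 1 "m * j"] by simp
  have "max m j \<le> m * j" using mult_le_mono1[of 1 m j] mult_le_mono2[of 1 j m] mj(1,2) by simp
  then have "exp (?\<psi> C') < real (m * j)" using mj(3) by linarith
  then have "?\<psi> C' < ln (real (m * j))"
    using ln_less_cancel_iff[of "exp (?\<psi> C')" "real (m * j)"] mj(1,2) by simp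
  then have "C' < inv_nonneg ?\<psi> (ln (real (m * j)))"
    using less_inv_young_fenchel_iff[OF N C'(1), of "ln (real (m * j))"] \<open>1 \<le> real (m * j)\<close> by simp
  have "x k n < inv_nonneg ?\<psi> (ln (real (m * j))) + e" if "k \<in> {1..m}" "n \<in> {1..j}" for k n
  proof -
    have "1 \<le> k * n" "k * n \<le> m * j" using that by (auto simp: one_le_mult_iff intro: mult_le_mono)
    then have "1 \<le> real (k * n)" "real (k * n) \<le> real (m * j)" by (simp_all only: of_nat_le_iff of_nat_1)
    then have "ln (real (k * n)) \<le> ln (real (m * j))" "0 \<le> ln (real (k * n))" by simp_all
    then have "inv_nonneg ?\<psi> (ln (real (k * n))) \<le> inv_nonneg ?\<psi> (ln (real (m * j)))"
      by (rule inv_young_fenchel_mono[OF N, rotated])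
    then show ?thesis
      using bound that \<open>C' < _\<close> C'(2) \<open>0 \<le> e\<close> by force
  qed
  then show "Max ((\<lambda>(k, n). x k n) ` ({1..m} \<times> {1..j})) < inv_nonneg ?\<psi> (ln (real (m * j))) + e"
    using mj(1,2) by (subst Max_less_iff) auto
qed

section \<open>The double array\<close>

lemma AE_all_pos_real:
  fixes P :: "real \<Rightarrow> 'a \<Rightarrow> bool"
  assumes "\<And>e. 0 < e \<Longrightarrow> AE x in M. P e x"
    and "\<And>d e x. 0 < d \<Longrightarrow> d \<le> e \<Longrightarrow> P d x \<Longrightarrow> P e x"
  shows "AE x in M. \<forall>e>0. P e x"
proof -
  have "AE x in M. \<forall>r::nat. P (inverse (real (Suc r))) x"
    using assms(1) by (subst AE_all_countable) simp
  then show ?thesis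
  proof (rule eventually_mono, intro allI impI)
    fix x e assume "\<forall>r::nat. P (inverse (real (Suc r))) x" "0 < (e::real)"
    moreover obtain r where "inverse (real (Suc r)) < e" using reals_Archimedean[OF \<open>0 < e\<close>] by blast
    ultimately show "P e x" using assms(2) by (meson less_imp_le of_nat_0_less_iff positive_imp_inverse_positive zero_less_Suc)
  qed
qed

locale phi_subgaussian_array = N_function_density \<phi> p for \<phi> p :: "real \<Rightarrow> real" +
  fixes M :: "'a measure" and X :: "nat \<Rightarrow> nat \<Rightarrow> 'a \<Rightarrow> real"
  assumes prob_space: "prob_space M"
    and subgaussian: "\<And>k n. 1 \<le> k \<Longrightarrow> 1 \<le> n \<Longrightarrow> phi_subgaussian M \<phi> (X k n)"
    and tau_phi_le_1: "\<And>k n. 1 \<le> k \<Longrightarrow> 1 \<le> n \<Longrightarrow> tau_phi M \<phi> (X k n) \<le> 1"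
begin

lemma measure_exceedance_le:
  assumes "1 \<le> k" "1 \<le> n" "0 \<le> u"
  shows "measure M {\<omega> \<in> space M. u \<le> X k n \<omega>} \<le> exp (- young_fenchel \<phi> u)"
proof -
  have "subg_bound M \<phi> (X k n) 1"
    using subg_bound_mono[OF N_function subg_bound_tau_phi[OF N_function subgaussian[OF assms(1,2)]]
        tau_phi_nonneg[OF subgaussian[OF assms(1,2)]] tau_phi_le_1[OF assms(1,2)]] .
  from subg_bound_tail[OF prob_space N_function this zero_less_one assms(3)] show ?thesis by simp
qed

lemma sets_exceedance:
  assumes "z \<in> hyperbola_points T"
  shows "(case z of (k, n) \<Rightarrow> {\<omega> \<in> space M. u \<le> X k n \<omega>}) \<in> sets M"
proof -
  obtain k n where z: "z = (k, n)" "1 \<le> k" "1 \<le> n" using assms unfolding hyperbola_points_def by auto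
  then have [measurable]: "X k n \<in> borel_measurable M"
    using subgaussian unfolding phi_subgaussian_def by blast
  show ?thesis unfolding z(1) by simp measurable
qed

definition block_exceedance :: "real \<Rightarrow> nat \<Rightarrow> 'a set" where
  "block_exceedance \<delta> i = (\<Union>(k, n)\<in>hyperbola_points (exp (young_fenchel \<phi> ((real i + 1) * \<delta>))).
     {\<omega> \<in> space M. (real i + 3) * \<delta> \<le> X k n \<omega>})"

lemma sets_block_exceedance: "block_exceedance \<delta> i \<in> sets M"
  unfolding block_exceedance_def
  by (rule sets.finite_UN[OF finite_hyperbola_points sets_exceedance])

lemma measure_block_exceedance_le:
  assumes "0 < \<delta>"
  shows "measure M (block_exceedance \<delta> i)
           \<le> (1 + young_fenchel \<phi> ((real i + 1) * \<delta>)) * exp (- \<delta> * gen_inv p ((real i + 2) * \<delta>))"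
proof -
  define \<psi>1 where "\<psi>1 = young_fenchel \<phi> ((real i + 1) * \<delta>)"
  define \<psi>3 where "\<psi>3 = young_fenchel \<phi> ((real i + 3) * \<delta>)"
  define q2 where "q2 = gen_inv p ((real i + 2) * \<delta>)"
  define S where "S = hyperbola_points (exp \<psi>1)"
  have "0 \<le> \<psi>1" unfolding \<psi>1_def using young_fenchel_nonneg[OF N_function] assms by simp
  have "measure M (block_exceedance \<delta> i)
          \<le> (\<Sum>z\<in>S. measure M (case z of (k, n) \<Rightarrow> {\<omega> \<in> space M. (real i + 3) * \<delta> \<le> X k n \<omega>}))"
    unfolding block_exceedance_def S_def \<psi>1_def
    by (rule measure_UNION_le[OF finite_hyperbola_points sets_exceedance])
  also have "\<dots> \<le> (\<Sum>z\<in>S. exp (- \<psi>3))"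
  proof (rule sum_mono)
    fix z assume "z \<in> S"
    then obtain k n where "z = (k, n)" "1 \<le> k" "1 \<le> n" unfolding S_def hyperbola_points_def by auto
    then show "measure M (case z of (k, n) \<Rightarrow> {\<omega> \<in> space M. (real i + 3) * \<delta> \<le> X k n \<omega>}) \<le> exp (- \<psi>3)"
      using measure_exceedance_le[of k n "(real i + 3) * \<delta>"] assms unfolding \<psi>3_def by simp
  qed
  also have "\<dots> = real (card S) * exp (- \<psi>3)" by simp
  also have "\<dots> \<le> exp \<psi>1 * (1 + \<psi>1) * exp (- \<psi>3)"
    using card_hyperbola_points_le[of "exp \<psi>1"] \<open>0 \<le> \<psi>1\<close> unfolding S_def
    by (intro mult_right_mono) simp_all
  also have "\<dots> = (1 + \<psi>1) * exp (\<psi>1 - \<psi>3)" by (simp add: exp_diff exp_minus divide_inverse ac_simps)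
  also have "\<dots> \<le> (1 + \<psi>1) * exp (- \<delta> * q2)"
  proof -
    have "(real i + 2) * \<delta> + \<delta> = (real i + 3) * \<delta>" by (simp add: algebra_simps)
    then have "young_fenchel \<phi> ((real i + 2) * \<delta>) + \<delta> * q2 \<le> \<psi>3"
      using young_fenchel_add_ge[of "(real i + 2) * \<delta>" \<delta>] assms unfolding q2_def \<psi>3_def by simp
    moreover have "\<psi>1 \<le> young_fenchel \<phi> ((real i + 2) * \<delta>)"
      using young_fenchel_le_iff[OF N_function, of "(real i + 1) * \<delta>" "(real i + 2) * \<delta>"] assms
      unfolding \<psi>1_def by simp
    ultimately have "exp (\<psi>1 - \<psi>3) \<le> exp (- \<delta> * q2)" by simp
    then show ?thesis using \<open>0 \<le> \<psi>1\<close> by (intro mult_left_mono) simp_all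
  qed
  finally show ?thesis unfolding \<psi>1_def q2_def .
qed

lemma AE_eventually_Max_below:
  assumes "0 < \<delta>"
    and "(\<integral>\<^sup>+ x\<in>{0..}. ennreal (young_fenchel \<phi> x * gen_inv p x * exp (- \<delta> * gen_inv p x)) \<partial>lborel) < \<infinity>"
  shows "AE \<omega> in M. \<exists>N. \<forall>m j. 1 \<le> m \<longrightarrow> 1 \<le> j \<longrightarrow> N \<le> max m j \<longrightarrow>
           Max ((\<lambda>(k, n). X k n \<omega>) ` ({1..m} \<times> {1..j}))
             < inv_nonneg (young_fenchel \<phi>) (ln (real (m * j))) + 3 * \<delta>"
proof -
  have "summable (\<lambda>i. measure M (block_exceedance \<delta> i))"
    using summable_block_bound[OF assms]
    by (rule summable_comparison_test'[where N = 0]) (use measure_block_exceedance_le[OF assms(1)] in simp)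
  moreover have "emeasure M (block_exceedance \<delta> i) < \<infinity>" for i
    using order_le_less_trans[OF prob_space.emeasure_le_1[OF prob_space] ennreal_one_less_top] by simp
  ultimately have "AE \<omega> in M. \<forall>\<^sub>F i in sequentially. \<omega> \<in> space M - block_exceedance \<delta> i"
    by (intro borel_cantelli_AE1 sets_block_exceedance)
  then show ?thesis
  proof (rule eventually_mono)
    fix \<omega> assume "\<forall>\<^sub>F i in sequentially. \<omega> \<in> space M - block_exceedance \<delta> i"
    then obtain I where I: "\<And>i. I \<le> i \<Longrightarrow> \<omega> \<in> space M - block_exceedance \<delta> i"
      by (auto simp: eventually_sequentially)
    have below: "X k n \<omega> < (real i + 3) * \<delta>"
      if "I \<le> i" "(k, n) \<in> hyperbola_points (exp (young_fenchel \<phi> ((real i + 1) * \<delta>)))" for i k n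
    proof -
      have "\<omega> \<in> space M" "\<omega> \<notin> block_exceedance \<delta> i" using I[OF that(1)] by auto
      then show ?thesis using that(2) unfolding block_exceedance_def by auto
    qed
    obtain C where C: "\<forall>k n. 1 \<le> k \<longrightarrow> 1 \<le> n \<longrightarrow>
        X k n \<omega> \<le> C \<or> X k n \<omega> < inv_nonneg (young_fenchel \<phi>) (ln (real (k * n))) + 3 * \<delta>"
      using bounded_or_below_inv_young_fenchel[where x = "\<lambda>k n. X k n \<omega>", OF N_function assms(1) below]
      by blast
    show "\<exists>N. \<forall>m j. 1 \<le> m \<longrightarrow> 1 \<le> j \<longrightarrow> N \<le> max m j \<longrightarrow>
        Max ((\<lambda>(k, n). X k n \<omega>) ` ({1..m} \<times> {1..j})) < inv_nonneg (young_fenchel \<phi>) (ln (real (m * j))) + 3 * \<delta>"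
      by (rule eventually_Max_below_inv_young_fenchel[OF N_function _ C]) (use assms(1) in simp)
  qed
qed

lemma AE_eventually_excess_less:
  assumes "0 < e" "0 < \<epsilon>0"
    and "\<And>\<epsilon>. 0 < \<epsilon> \<Longrightarrow> \<epsilon> \<le> \<epsilon>0 \<Longrightarrow>
           (\<integral>\<^sup>+ x\<in>{0..}. ennreal (young_fenchel \<phi> x * gen_inv p x * exp (- \<epsilon> * gen_inv p x)) \<partial>lborel) < \<infinity>"
  shows "AE \<omega> in M. \<exists>N. \<forall>m j. m \<ge> 1 \<longrightarrow> j \<ge> 1 \<longrightarrow> max m j \<ge> N \<longrightarrow>
           \<bar>max (Max ((\<lambda>(k, n). X k n \<omega>) ` ({1..m} \<times> {1..j}))
                   - inv_nonneg (young_fenchel \<phi>) (ln (real (m * j)))) 0\<bar> < e"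
proof -
  define \<delta> where "\<delta> = min e \<epsilon>0 / 3"
  have \<delta>: "0 < \<delta>" "\<delta> \<le> \<epsilon>0" "3 * \<delta> \<le> e" using assms(1,2) unfolding \<delta>_def by auto
  show ?thesis
    using AE_eventually_Max_below[OF \<delta>(1) assms(3)[OF \<delta>(1,2)]]
  proof (rule eventually_mono, elim exE, intro exI allI impI)
    fix \<omega> N m j
    assume "\<forall>m j. 1 \<le> m \<longrightarrow> 1 \<le> j \<longrightarrow> N \<le> max m j \<longrightarrow>
      Max ((\<lambda>(k, n). X k n \<omega>) ` ({1..m} \<times> {1..j})) < inv_nonneg (young_fenchel \<phi>) (ln (real (m * j))) + 3 * \<delta>"
      and "1 \<le> m" "1 \<le> j" "N \<le> max m j"
    then have "Max ((\<lambda>(k, n). X k n \<omega>) ` ({1..m} \<times> {1..j}))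
                 < inv_nonneg (young_fenchel \<phi>) (ln (real (m * j))) + 3 * \<delta>"
      by blast
    then show "\<bar>max (Max ((\<lambda>(k, n). X k n \<omega>) ` ({1..m} \<times> {1..j}))
                   - inv_nonneg (young_fenchel \<phi>) (ln (real (m * j)))) 0\<bar> < e"
      unfolding abs_of_nonneg[OF max.cobounded2] max_less_iff_conj using \<delta>(3) assms(1) by linarith
  qed
qed

end

theorem corollary1:
  fixes M :: "'a measure" and \<phi> p :: "real \<Rightarrow> real"
    and X :: "nat \<Rightarrow> nat \<Rightarrow> 'a \<Rightarrow> real" and \<epsilon>0 :: real
  assumes "prob_space M"
    and "N_function \<phi>"
    and "mono p"
    and "\<And>x. \<phi> x = integral {0..\<bar>x\<bar>} p"
    and "\<And>k n. k \<ge> 1 \<Longrightarrow> n \<ge> 1 \<Longrightarrow> phi_subgaussian M \<phi> (X k n)"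
    and "\<And>k n. k \<ge> 1 \<Longrightarrow> n \<ge> 1 \<Longrightarrow> tau_phi M \<phi> (X k n) \<le> 1"
    and "\<epsilon>0 > 0"
    and "\<And>\<epsilon>. 0 < \<epsilon> \<Longrightarrow> \<epsilon> \<le> \<epsilon>0 \<Longrightarrow>
           (\<integral>\<^sup>+ x\<in>{0..}. ennreal (young_fenchel \<phi> x * gen_inv p x * exp (- \<epsilon> * gen_inv p x)) \<partial>lborel) < \<infinity>"
  shows "AE \<omega> in M. \<forall>e>0. \<exists>N. \<forall>m j. m \<ge> 1 \<longrightarrow> j \<ge> 1 \<longrightarrow> max m j \<ge> N \<longrightarrow>
           \<bar>max (Max ((\<lambda>(k, n). X k n \<omega>) ` ({1..m} \<times> {1..j}))
                   - inv_nonneg (young_fenchel \<phi>) (ln (real (m * j)))) 0\<bar> < e"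
proof -
  interpret phi_subgaussian_array \<phi> p M X
    by (intro phi_subgaussian_array.intro N_function_density.intro phi_subgaussian_array_axioms.intro)
       (fact assms)+
  show ?thesis
  proof (rule AE_all_pos_real[OF AE_eventually_excess_less[OF _ assms(7,8)]])
    fix d e :: real and \<omega> assume "d \<le> e"
      and "\<exists>N. \<forall>m j. m \<ge> 1 \<longrightarrow> j \<ge> 1 \<longrightarrow> max m j \<ge> N \<longrightarrow>
             \<bar>max (Max ((\<lambda>(k, n). X k n \<omega>) ` ({1..m} \<times> {1..j}))
                     - inv_nonneg (young_fenchel \<phi>) (ln (real (m * j)))) 0\<bar> < d"
    then show "\<exists>N. \<forall>m j. m \<ge> 1 \<longrightarrow> j \<ge> 1 \<longrightarrow> max m j \<ge> N \<longrightarrow>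
             \<bar>max (Max ((\<lambda>(k, n). X k n \<omega>) ` ({1..m} \<times> {1..j}))
                     - inv_nonneg (young_fenchel \<phi>) (ln (real (m * j)))) 0\<bar> < e"
      by (blast intro: order_less_le_trans)
  qed
qed

end
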